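(* Let $\mathcal M$ be a companion-connected mixture of $L$ Markov chains on $n$ states, let $r=\sum_{\ell}|\mathcal C^\ell|$, let $R\in\mathbb R^{r\times r}$ be any invertible matrix, and for $k\in[n]$ put $R_{\mathrm{inv}(k)}=R^{-1}\Xi_k\in\mathbb R^{r\times L}$. Then for any states $i,j\in[n]$, the matrix $R_{\mathrm{inv}(j)}^\dagger R_{\mathrm{inv}(i)}\in\mathbb R^{L\times L}$ is the inverse of $R_{\mathrm{inv}(i)}^\dagger R_{\mathrm{inv}(j)}$ if and only if $\Xi_i=\Xi_j$ (i.e. $i$ and $j$ lie in the same connected component in every chain).
   Context: A mixture of $L$ Markov chains on $[n]$: row-stochastic $M^1,\dots,M^L\in\mathbb R^{n\times n}$ and starting vectors $s^\ell\in\mathbb R^n_{\ge0}$ with $\sum_{\ell,i}s^\ell_i=1$. For each $\ell$, $G^\ell$ is the undirected bipartite graph on $V^\pm=\{1^+,\dots,n^+,1^-,\dots,n^-\}$ with an edge $\{i^-,j^+\}$ whenever $M^\ell_{ij}>0$, and $\mathcal C^\ell$ is its set of connected components. The mixture is companion-connected if for each $j\in[n]$ there is $i\ne j$ such that for every $\ell$, $j^-$ and $i^-$ lie in the same component of $G^\ell$ as $j^+$ (so $j^+$ and $j^-$ are always in the same component; call it the component of chain $\ell$ containing $j$). Enumerate all components of all chains as $q=1,\dots,r$, $r=\sum_\ell|\mathcal C^\ell|$. For $j\in[n]$, $\Xi_j\in\{0,1\}^{r\times L}$ has $\Xi_j(q,\ell)=1$ iff the $q$-th component belongs to $\mathcal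 C^\ell$ and contains $j$, and $0$ otherwise. $A^\dagger$ denotes the Moore–Penrose pseudoinverse. *)

theory Defs
  imports "Jordan_Normal_Form.Matrix"
begin

(* States are 0..<n, chains are 0..<L.  A vertex of the bipartite graph is
   (i, True) = i^+ and (i, False) = i^-.  *)

definition vertices :: "nat \<Rightarrow> (nat \<times> bool) set" where
  "vertices n = {v. fst v < n}"

definition gedge :: "nat \<Rightarrow> real mat \<Rightarrow> nat \<times> bool \<Rightarrow> nat \<times> bool \<Rightarrow> bool" where
  "gedge n A u v \<longleftrightarrow>
     (\<exists>i j. i < n \<and> j < n \<and> A $$ (i, j) > 0 \<and>
        ((u = (i, False) \<and> v = (j, True)) \<or> (u = (j, True) \<and> v = (i, False))))"

definition gconn :: "nat \<Rightarrow> real mat \<Rightarrow> nat \<times> bool \<Rightarrow> nat \<times> bool \<Rightarrow> bool" where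
  "gconn n A u v \<longleftrightarrow> u \<in> vertices n \<and> v \<in> vertices n \<and> (gedge n A)\<^sup>*\<^sup>* u v"

definition components :: "nat \<Rightarrow> real mat \<Rightarrow> (nat \<times> bool) set set" where
  "components n A = (\<lambda>u. {v. gconn n A u v}) ` vertices n"

definition row_stochastic :: "nat \<Rightarrow> real mat \<Rightarrow> bool" where
  "row_stochastic n A \<longleftrightarrow> A \<in> carrier_mat n n \<and>
     (\<forall>i<n. \<forall>j<n. A $$ (i, j) \<ge> 0) \<and> (\<forall>i<n. (\<Sum>j<n. A $$ (i, j)) = 1)"

definition mixture :: "nat \<Rightarrow> nat \<Rightarrow> (nat \<Rightarrow> real mat) \<Rightarrow> (nat \<Rightarrow> nat \<Rightarrow> real) \<Rightarrow> bool" where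
  "mixture n L M s \<longleftrightarrow> (\<forall>l<L. row_stochastic n (M l)) \<and>
     (\<forall>l<L. \<forall>i<n. s l i \<ge> 0) \<and> (\<Sum>l<L. \<Sum>i<n. s l i) = 1"

definition companion_connected :: "nat \<Rightarrow> nat \<Rightarrow> (nat \<Rightarrow> real mat) \<Rightarrow> bool" where
  "companion_connected n L M \<longleftrightarrow>
     (\<forall>j<n. \<exists>i<n. i \<noteq> j \<and> (\<forall>l<L.
        gconn n (M l) (j, True) (j, False) \<and> gconn n (M l) (j, True) (i, False)))"

(* all (chain, component) pairs; an enumeration q = 0..<r of them is a bijection onto this set *)
definition all_components :: "nat \<Rightarrow> nat \<Rightarrow> (nat \<Rightarrow> real mat) \<Rightarrow> (nat \<times> (nat \<times> bool) set) set" where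
  "all_components n L M = {(l, C). l < L \<and> C \<in> components n (M l)}"

definition Xi :: "nat \<Rightarrow> nat \<Rightarrow> (nat \<Rightarrow> nat \<times> (nat \<times> bool) set) \<Rightarrow> nat \<Rightarrow> real mat" where
  "Xi r L enum j = mat r L (\<lambda>(q, l). if fst (enum q) = l \<and> (j, True) \<in> snd (enum q) then 1 else 0)"

(* Moore-Penrose pseudoinverse (real matrices: conjugate transpose = transpose) *)
definition pinv :: "real mat \<Rightarrow> real mat" where
  "pinv A = (THE X. X \<in> carrier_mat (dim_col A) (dim_row A) \<and>
      A * X * A = A \<and> X * A * X = X \<and>
      transpose_mat (A * X) = A * X \<and> transpose_mat (X * A) = X * A)"

definition mat_inv :: "real mat \<Rightarrow> real mat" where
  "mat_inv R = (THE B. B \<in> carrier_mat (dim_row R) (dim_row R) \<and>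
      R * B = 1\<^sub>m (dim_row R) \<and> B * R = 1\<^sub>m (dim_row R))"

definition is_inverse_of :: "nat \<Rightarrow> real mat \<Rightarrow> real mat \<Rightarrow> bool" where
  "is_inverse_of k X A \<longleftrightarrow> X \<in> carrier_mat k k \<and> A \<in> carrier_mat k k \<and>
      X * A = 1\<^sub>m k \<and> A * X = 1\<^sub>m k"

end

theory Submission
  imports Defs "Jordan_Normal_Form.Determinant"
begin

text \<open>
  Each column l of Xi_k has a 1 in the row of the component of chain l containing k, so
  Xi_k and A_k = R^{-1} Xi_k have left inverses; for such matrices the pseudoinverse is
  the left inverse (A^T A)^{-1} A^T and A A^+ is the orthogonal projection onto the range
  of A. If (A_j^+ A_i)(A_i^+ A_j) = 1, the part of A_j orthogonal to the range of A_i is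
  orthogonal to A_j itself, hence zero, so Xi_j = Xi_i K for some K. In the row of the
  component of chain l containing j this forces i into that component, for every l,
  i.e. Xi_i = Xi_j. The converse is A^+ A = 1.
\<close>

lemma gconn_sym: "gconn n A u v \<Longrightarrow> gconn n A v u"
proof -
  have "symp (gedge n A)" unfolding gedge_def by (intro sympI) blast
  then show "gconn n A u v \<Longrightarrow> gconn n A v u"
    unfolding gconn_def by (blast dest: sympD[OF symp_rtranclp])
qed

lemma gconn_trans: "gconn n A u v \<Longrightarrow> gconn n A v w \<Longrightarrow> gconn n A u w"
  unfolding gconn_def by (meson rtranclp_trans)

definition component_of :: "nat \<Rightarrow> real mat \<Rightarrow> nat \<Rightarrow> (nat \<times> bool) set" where
  "component_of n A k = {v. gconn n A (k, True) v}"

lemma component_of_in_components: "k < n \<Longrightarrow> component_of n A k \<in> components n A"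
  unfolding components_def component_of_def vertices_def by force

lemma self_in_component_of: "k < n \<Longrightarrow> (k, True) \<in> component_of n A k"
  unfolding component_of_def gconn_def vertices_def by simp

lemma mem_components_iff:
  "C \<in> components n A \<Longrightarrow> gconn n A u v \<Longrightarrow> u \<in> C \<longleftrightarrow> v \<in> C"
  unfolding components_def using gconn_trans gconn_sym by blast

lemma index_Xi:
  "q < r \<Longrightarrow> l < L \<Longrightarrow> Xi r L enum k $$ (q, l) =
     (if fst (enum q) = l \<and> (k, True) \<in> snd (enum q) then 1 else 0)"
  by (simp add: Xi_def)

lemma Xi_carrier: "Xi r L enum k \<in> carrier_mat r L"
  by (simp add: Xi_def)

definition left_invertible :: "'a :: semiring_1 mat \<Rightarrow> bool" where
  "left_invertible A \<longleftrightarrow>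
     (\<exists>G \<in> carrier_mat (dim_col A) (dim_row A). G * A = 1\<^sub>m (dim_col A))"

lemma left_invertible_mult:
  assumes B: "B \<in> carrier_mat m m" "left_invertible B"
    and A: "A \<in> carrier_mat m k" "left_invertible A"
  shows "left_invertible (B * A)"
proof -
  obtain GB GA where GB: "GB \<in> carrier_mat m m" "GB * B = 1\<^sub>m m"
    and GA: "GA \<in> carrier_mat k m" "GA * A = 1\<^sub>m k"
    using A B unfolding left_invertible_def by auto
  have "(GA * GB) * (B * A) = GA * (GB * (B * A))"
    using A B GA GB by (simp add: assoc_mult_mat[of GA k m GB m "B * A" k])
  also have "GB * (B * A) = A"
    using A B GB by (simp flip: assoc_mult_mat[of GB m m B m A k])
  finally have "(GA * GB) * (B * A) = 1\<^sub>m k" using GA by simp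
  then show ?thesis
    unfolding left_invertible_def using A B GA GB by (intro bexI[of _ "GA * GB"]) auto
qed

context
  fixes n L r :: nat and M :: "nat \<Rightarrow> real mat"
    and enum :: "nat \<Rightarrow> nat \<times> (nat \<times> bool) set"
  assumes enum: "bij_betw enum {..<r} (all_components n L M)"
begin

lemma enum_component_of:
  assumes "k < n" "l < L"
  shows "\<exists>q<r. enum q = (l, component_of n (M l) k)"
proof -
  have "(l, component_of n (M l) k) \<in> all_components n L M"
    using assms component_of_in_components unfolding all_components_def by auto
  then show ?thesis using bij_betw_imp_surj_on[OF enum] by force
qed

lemma enum_in_components:
  assumes "q < r"
  shows "fst (enum q) < L \<and> snd (enum q) \<in> components n (M (fst (enum q)))"
proof -
  have "enum q \<in> all_components n L M" using bij_betwE[OF enum] assms by blast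
  then show ?thesis unfolding all_components_def by (cases "enum q") auto
qed

lemma Xi_left_invertible:
  assumes k: "k < n"
  shows "left_invertible (Xi r L enum k)"
proof -
  obtain qq where qq: "\<And>l. l < L \<Longrightarrow> qq l < r \<and> enum (qq l) = (l, component_of n (M l) k)"
    using enum_component_of[OF k] by metis
  define G where "G = mat L r (\<lambda>(l, q). if q = qq l then 1 else (0::real))"
  have "G * Xi r L enum k = 1\<^sub>m L"
  proof (rule eq_matI)
    fix l m assume "l < dim_row (1\<^sub>m L :: real mat)" "m < dim_col (1\<^sub>m L :: real mat)"
    then have l: "l < L" and m: "m < L" by auto
    have "(G * Xi r L enum k) $$ (l, m) =
        (\<Sum>q\<in>{0..<r}. (if q = qq l then 1 else 0) * Xi r L enum k $$ (q, m))"
      using l m by (simp add: G_def Xi_def scalar_prod_def)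
    also have "\<dots> = (\<Sum>q\<in>{0..<r}. if q = qq l then Xi r L enum k $$ (q, m) else 0)"
      by (rule sum.cong) auto
    also have "\<dots> = Xi r L enum k $$ (qq l, m)"
      using qq[OF l] by simp
    also have "\<dots> = 1\<^sub>m L $$ (l, m)"
      using qq[OF l] l m index_Xi[of "qq l" r m L enum k] self_in_component_of[OF k] by auto
    finally show "(G * Xi r L enum k) $$ (l, m) = 1\<^sub>m L $$ (l, m)" .
  qed (auto simp: G_def Xi_def)
  then show ?thesis unfolding left_invertible_def G_def Xi_def by auto
qed

lemma Xi_eq_if_factor:
  assumes i: "i < n" and j: "j < n" and K: "K \<in> carrier_mat L L"
    and factor: "Xi r L enum j = Xi r L enum i * K"
  shows "Xi r L enum i = Xi r L enum j"
proof -
  have conn: "gconn n (M l) (i, True) (j, True)" if l: "l < L" for l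
  proof (rule ccontr)
    assume not_conn: "\<not> gconn n (M l) (i, True) (j, True)"
    obtain q where q: "q < r" "enum q = (l, component_of n (M l) j)"
      using enum_component_of[OF j l] by blast
    have i_notin: "(i, True) \<notin> snd (enum q)"
      using q not_conn gconn_sym unfolding component_of_def by auto
    have "Xi r L enum j $$ (q, l) = 1"
      using q l index_Xi self_in_component_of[OF j] by simp
    moreover have "(Xi r L enum i * K) $$ (q, l) =
        (\<Sum>m\<in>{0..<L}. Xi r L enum i $$ (q, m) * K $$ (m, l))"
      using q l K by (simp add: Xi_def scalar_prod_def)
    moreover have "\<dots> = 0"
      using q i_notin by (intro sum.neutral) (auto simp: index_Xi)
    ultimately show False using factor by simp
  qed
  show ?thesis
  proof (rule eq_matI)
    fix q l assume "q < dim_row (Xi r L enum j)" "l < dim_col (Xi r L enum j)"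
    then have q: "q < r" and l: "l < L" by (auto simp: Xi_def)
    have "fst (enum q) = l \<Longrightarrow> (i, True) \<in> snd (enum q) \<longleftrightarrow> (j, True) \<in> snd (enum q)"
      using enum_in_components[OF q] mem_components_iff conn[OF l] by blast
    then show "Xi r L enum i $$ (q, l) = Xi r L enum j $$ (q, l)"
      using q l by (auto simp: index_Xi)
  qed (simp_all add: Xi_def)
qed

end

lemma mat_eq_0_if_gram_eq_0:
  fixes D :: "real mat"
  assumes D: "D \<in> carrier_mat m k" and gram: "transpose_mat D * D = 0\<^sub>m k k"
  shows "D = 0\<^sub>m m k"
proof (rule eq_matI)
  fix q l assume "q < dim_row (0\<^sub>m m k :: real mat)" "l < dim_col (0\<^sub>m m k :: real mat)"
  then have q: "q < m" and l: "l < k" by auto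
  have "col D l \<bullet> col D l = (transpose_mat D * D) $$ (l, l)"
    using D l by simp
  then have "col D l = 0\<^sub>v m"
    using gram l conjugate_square_eq_0_vec[of "col D l" m] D by simp
  then have "col D l $ q = 0" using q by simp
  then show "D $$ (q, l) = 0\<^sub>m m k $$ (q, l)" using D q l by simp
qed (use D in auto)

lemma det_gram_neq_0:
  fixes A :: "real mat"
  assumes A: "A \<in> carrier_mat m k" and inv: "left_invertible A"
  shows "det (transpose_mat A * A) \<noteq> 0"
proof
  obtain G where G: "G \<in> carrier_mat k m" "G * A = 1\<^sub>m k"
    using inv A unfolding left_invertible_def by auto
  assume "det (transpose_mat A * A) = 0"
  then obtain v where v: "v \<in> carrier_vec k" "v \<noteq> 0\<^sub>v k" "(transpose_mat A * A) *\<^sub>v v = 0\<^sub>v k"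
    using det_0_iff_vec_prod_zero[of "transpose_mat A * A" k] A by auto
  have Av: "A *\<^sub>v v \<in> carrier_vec m" using A v by simp
  have "transpose_mat A *\<^sub>v (A *\<^sub>v v) = (transpose_mat A * A) *\<^sub>v v"
    using assoc_mult_mat_vec[of "transpose_mat A" k m A k v] A v by simp
  then have AtAv: "transpose_mat A *\<^sub>v (A *\<^sub>v v) = 0\<^sub>v k" using v(3) by simp
  have "(A *\<^sub>v v) \<bullet> (A *\<^sub>v v) = (transpose_mat A *\<^sub>v (A *\<^sub>v v)) \<bullet> v"
    using transpose_vec_mult_scalar[OF A v(1) Av] by simp
  also have "\<dots> = 0" using AtAv v(1) by simp
  finally have "A *\<^sub>v v = 0\<^sub>v m"
    using conjugate_square_eq_0_vec[OF Av] by simp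
  then have "G *\<^sub>v (A *\<^sub>v v) = 0\<^sub>v k"
    using G by (auto intro!: eq_vecI simp: scalar_prod_def)
  moreover have "G *\<^sub>v (A *\<^sub>v v) = (G * A) *\<^sub>v v"
    using assoc_mult_mat_vec[of G k m A k v] G A v by simp
  moreover have "(G * A) *\<^sub>v v = v" using G v by simp
  ultimately show False using v by simp
qed

definition is_pinv :: "real mat \<Rightarrow> real mat \<Rightarrow> bool" where
  "is_pinv A X \<longleftrightarrow> X \<in> carrier_mat (dim_col A) (dim_row A) \<and>
      A * X * A = A \<and> X * A * X = X \<and>
      transpose_mat (A * X) = A * X \<and> transpose_mat (X * A) = X * A"

lemma is_pinv_if_left_inverse:
  assumes A: "A \<in> carrier_mat m k" and X: "X \<in> carrier_mat k m"
    and XA: "X * A = 1\<^sub>m k" and sym: "transpose_mat (A * X) = A * X"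
  shows "is_pinv A X"
proof -
  have "A * X * A = A" using assoc_mult_mat[OF A X A] XA A by simp
  moreover have "X * A * X = X" using XA X by simp
  ultimately show ?thesis unfolding is_pinv_def using A X XA sym by simp
qed

lemma is_pinv_left_inverse:
  assumes A: "A \<in> carrier_mat m k" and inv: "left_invertible A" and X: "is_pinv A X"
  shows "X * A = 1\<^sub>m k"
proof -
  obtain G where G: "G \<in> carrier_mat k m" "G * A = 1\<^sub>m k"
    using inv A unfolding left_invertible_def by auto
  have Xc: "X \<in> carrier_mat k m" and AXA: "A * (X * A) = A"
    using X A assoc_mult_mat[of A m k X m A k] unfolding is_pinv_def by auto
  have "X * A = (G * A) * (X * A)" using G Xc A by simp
  also have "\<dots> = G * (A * (X * A))"
    using assoc_mult_mat[of G k m A k "X * A" k] G A Xc by simp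
  finally show ?thesis using AXA G by simp
qed

lemma is_pinv_exists:
  assumes A: "A \<in> carrier_mat m k" and inv: "left_invertible A"
  shows "\<exists>X. is_pinv A X"
proof -
  define N where "N = transpose_mat A * A"
  have N: "N \<in> carrier_mat k k" using A N_def by auto
  have "N \<in> Units (ring_mat TYPE(real) k ())"
    using det_non_zero_imp_unit[OF N] det_gram_neq_0[OF A inv] N_def by auto
  then obtain Ni where Ni: "Ni \<in> carrier_mat k k" "Ni * N = 1\<^sub>m k" "N * Ni = 1\<^sub>m k"
    unfolding Units_def ring_mat_def by auto
  have "transpose_mat N = N" unfolding N_def using A by (simp add: transpose_mult[OF _ A])
  then have "transpose_mat Ni * N = 1\<^sub>m k"
    using transpose_mult[OF N Ni(1)] Ni by simp
  then have Ni_sym: "transpose_mat Ni = Ni"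
    using assoc_mult_mat[of "transpose_mat Ni" k k N k Ni k] N Ni by simp
  define X where "X = Ni * transpose_mat A"
  have X: "X \<in> carrier_mat k m" using X_def Ni A by auto
  have "X * A = 1\<^sub>m k"
    unfolding X_def using assoc_mult_mat[of Ni k k "transpose_mat A" m A k] Ni A N_def by simp
  moreover have "transpose_mat (A * X) = A * X"
  proof -
    have "transpose_mat X = A * Ni"
      unfolding X_def using transpose_mult[of Ni k k "transpose_mat A" m] A Ni Ni_sym by simp
    then show ?thesis
      using transpose_mult[OF A X] assoc_mult_mat[of A m k Ni k "transpose_mat A" m] A Ni
      unfolding X_def by simp
  qed
  ultimately show ?thesis using is_pinv_if_left_inverse[OF A X] by blast
qed

lemma is_pinv_unique:
  assumes A: "A \<in> carrier_mat m k" and inv: "left_invertible A"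
    and X: "is_pinv A X" and Y: "is_pinv A Y"
  shows "X = Y"
proof -
  have Xc: "X \<in> carrier_mat k m" and Yc: "Y \<in> carrier_mat k m"
    and symX: "transpose_mat (A * X) = A * X" and symY: "transpose_mat (A * Y) = A * Y"
    using X Y A unfolding is_pinv_def by auto
  have XA: "X * A = 1\<^sub>m k" and YA: "Y * A = 1\<^sub>m k"
    using is_pinv_left_inverse[OF A inv] X Y by auto
  have "A * X = (A * Y) * (A * X)"
    using assoc_mult_mat[of A m k Y m "A * X" m] assoc_mult_mat[of Y k m A k X m] A Xc Yc YA
    by simp
  also have "\<dots> = transpose_mat ((A * X) * (A * Y))"
    using transpose_mult[of "A * X" m m "A * Y" m] A Xc Yc symX symY by simp
  also have "(A * X) * (A * Y) = A * Y"
    using assoc_mult_mat[of A m k X m "A * Y" m] assoc_mult_mat[of X k m A k Y m] A Xc Yc XA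
    by simp
  finally have AX_AY: "A * X = A * Y" using symY by simp
  have "X = (Y * A) * X" using YA Xc by simp
  also have "\<dots> = Y * (A * Y)" using assoc_mult_mat[of Y k m A k X m] A Xc Yc AX_AY by simp
  also have "\<dots> = Y" using assoc_mult_mat[of Y k m A k Y m] A Yc YA by simp
  finally show ?thesis .
qed

lemma pinv_left_invertible:
  assumes A: "A \<in> carrier_mat m k" and inv: "left_invertible A"
  shows "pinv A \<in> carrier_mat k m" "pinv A * A = 1\<^sub>m k"
    "transpose_mat (A * pinv A) = A * pinv A"
proof -
  obtain X where X: "is_pinv A X" using is_pinv_exists[OF A inv] by blast
  have "pinv A = (THE X. is_pinv A X)" unfolding pinv_def is_pinv_def ..
  then have "is_pinv A (pinv A)"
    using theI[of "is_pinv A" X] X is_pinv_unique[OF A inv] by metis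
  then show "pinv A \<in> carrier_mat k m" "pinv A * A = 1\<^sub>m k"
    "transpose_mat (A * pinv A) = A * pinv A"
    using A is_pinv_left_inverse[OF A inv] unfolding is_pinv_def by auto
qed

lemma projection_fixes_if_residual_orthogonal:
  fixes P B :: "real mat"
  assumes P: "P \<in> carrier_mat m m" and P_sym: "transpose_mat P = P" and P_idem: "P * P = P"
    and B: "B \<in> carrier_mat m k" and orth: "transpose_mat B * (B - P * B) = 0\<^sub>m k k"
  shows "P * B = B"
proof -
  define D where "D = B - P * B"
  have PB: "P * B \<in> carrier_mat m k" and D: "D \<in> carrier_mat m k"
    using P B unfolding D_def by auto
  have "P * D = P * B - (P * P) * B"
    unfolding D_def using mult_minus_distrib_mat[OF P B PB] assoc_mult_mat[OF P P B] by simp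
  then have "transpose_mat D * P = 0\<^sub>m k m"
    using transpose_mult[OF P D] P_sym P_idem PB by simp
  moreover have "transpose_mat D * B = 0\<^sub>m k k"
    using transpose_mult[of "transpose_mat B" k m D k] orth B D unfolding D_def by simp
  moreover have "transpose_mat D * D = transpose_mat D * B - (transpose_mat D * P) * B"
  proof -
    have DT: "transpose_mat D \<in> carrier_mat k m" using D by simp
    show ?thesis
      using mult_minus_distrib_mat[OF DT B PB] assoc_mult_mat[OF DT P B]
      unfolding D_def[symmetric] by simp
  qed
  ultimately have "transpose_mat D * D = 0\<^sub>m k k" using B by simp
  then have D0: "D = 0\<^sub>m m k" by (rule mat_eq_0_if_gram_eq_0[OF D])
  show ?thesis
  proof (rule eq_matI)
    fix q l assume ql: "q < dim_row B" "l < dim_col B"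
    have "D $$ (q, l) = 0" using ql B D0 by simp
    moreover have "D $$ (q, l) = B $$ (q, l) - (P * B) $$ (q, l)" using ql B P by (simp add: D_def)
    ultimately
    show "(P * B) $$ (q, l) = B $$ (q, l)" by simp
  qed (use B P in simp_all)
qed

text \<open>With P = A A^+, the residual B - P B is annihilated by B^+, hence by
  B^T = B^T B B^+.\<close>
lemma factor_if_pinv_products_inverse:
  fixes A B :: "real mat"
  assumes A: "A \<in> carrier_mat m k" "left_invertible A"
    and B: "B \<in> carrier_mat m k" "left_invertible B"
    and inverse: "(pinv B * A) * (pinv A * B) = 1\<^sub>m k"
  shows "B = A * (pinv A * B)"
proof -
  define X Y where "X = pinv A" and "Y = pinv B"
  have X: "X \<in> carrier_mat k m" "X * A = 1\<^sub>m k" "transpose_mat (A * X) = A * X"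
    using pinv_left_invertible[OF A] unfolding X_def by auto
  have Y: "Y \<in> carrier_mat k m" "Y * B = 1\<^sub>m k" "transpose_mat (B * Y) = B * Y"
    using pinv_left_invertible[OF B] unfolding Y_def by auto
  define P where "P = A * X"
  have P: "P \<in> carrier_mat m m" using A X unfolding P_def by simp
  have P_idem: "P * P = P"
    unfolding P_def
    using assoc_mult_mat[of A m k X m "A * X" m] assoc_mult_mat[of X k m A k X m] A X by simp
  have PB: "P * B = A * (X * B)"
    unfolding P_def using assoc_mult_mat[of A m k X m B k] A B X by simp
  have "Y * (B - P * B) = 0\<^sub>m k k"
  proof -
    have "Y * (P * B) = (Y * A) * (X * B)"
      unfolding PB using assoc_mult_mat[of Y k m A k "X * B" k] A B X Y by simp
    then show ?thesis
      using mult_minus_distrib_mat[of Y k m B k "P * B"] inverse Y B P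
      unfolding X_def Y_def by simp
  qed
  moreover have "transpose_mat B = transpose_mat B * (B * Y)"
    using transpose_mult[of B m k Y m] transpose_mult[of "B * Y" m m B k]
      assoc_mult_mat[of B m k Y m B k] B Y by simp
  ultimately have "transpose_mat B * (B - P * B) = 0\<^sub>m k k"
    using assoc_mult_mat[of "transpose_mat B" k m "B * Y" m "B - P * B" k]
      assoc_mult_mat[of B m k Y m "B - P * B" k] B Y P by (simp add: minus_carrier_mat)
  then have "P * B = B"
    using projection_fixes_if_residual_orthogonal[OF P _ P_idem B(1)] X(3) unfolding P_def by blast
  then show ?thesis using PB X_def by simp
qed

lemma mat_inv_inverse:
  fixes R :: "real mat"
  assumes R: "R \<in> carrier_mat r r" and inv: "invertible_mat R"
  shows "mat_inv R \<in> carrier_mat r r" "R * mat_inv R = 1\<^sub>m r" "mat_inv R * R = 1\<^sub>m r"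
proof -
  define is_inv where "is_inv B \<longleftrightarrow> B \<in> carrier_mat r r \<and> R * B = 1\<^sub>m r \<and> B * R = 1\<^sub>m r" for B
  obtain B where "R * B = 1\<^sub>m (dim_row R)" "B * R = 1\<^sub>m (dim_row B)"
    using inv unfolding invertible_mat_def inverts_mat_def by auto
  then have B: "B \<in> carrier_mat r r" "R * B = 1\<^sub>m r" "B * R = 1\<^sub>m r"
    using R by (metis carrier_matD carrier_matI index_mult_mat(2,3) index_one_mat(2,3))+
  have "C = B" if "is_inv C" for C
  proof -
    have C: "C \<in> carrier_mat r r" "C * R = 1\<^sub>m r" using that unfolding is_inv_def by auto
    have "C = C * (R * B)" using B C by simp
    also have "\<dots> = (C * R) * B" using assoc_mult_mat[OF C(1) R B(1)] by simp
    finally show ?thesis using B C by simp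
  qed
  then have "is_inv (THE C. is_inv C)" using theI[of is_inv B] B unfolding is_inv_def by blast
  moreover have "mat_inv R = (THE C. is_inv C)" unfolding mat_inv_def is_inv_def using R by simp
  ultimately show "mat_inv R \<in> carrier_mat r r" "R * mat_inv R = 1\<^sub>m r" "mat_inv R * R = 1\<^sub>m r"
    unfolding is_inv_def by auto
qed

lemma left_invertible_mat_inv:
  fixes R :: "real mat"
  assumes "R \<in> carrier_mat r r" "invertible_mat R"
  shows "left_invertible (mat_inv R)"
  using mat_inv_inverse[OF assms] assms unfolding left_invertible_def by auto

lemma mat_inv_mult_left_cancel:
  fixes R Z W :: "real mat"
  assumes R: "R \<in> carrier_mat r r" "invertible_mat R"
    and Z: "Z \<in> carrier_mat r k" and W: "W \<in> carrier_mat r k"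
    and eq: "mat_inv R * Z = mat_inv R * W"
  shows "Z = W"
proof -
  note Ri = mat_inv_inverse[OF R]
  have "Z = (R * mat_inv R) * Z" using Ri Z by simp
  also have "\<dots> = R * (mat_inv R * W)" using assoc_mult_mat[OF R(1) Ri(1) Z] eq by simp
  also have "\<dots> = W" using assoc_mult_mat[OF R(1) Ri(1) W] Ri W by simp
  finally show ?thesis .
qed

theorem lemma3:
  fixes n L r :: nat
    and M :: "nat \<Rightarrow> real mat"
    and s :: "nat \<Rightarrow> nat \<Rightarrow> real"
    and enum :: "nat \<Rightarrow> nat \<times> (nat \<times> bool) set"
    and R :: "real mat"
    and i j :: nat
  assumes "mixture n L M s"
    and "companion_connected n L M"
    and "r = (\<Sum>l<L. card (components n (M l)))"
    and "bij_betw enum {..<r} (all_components n L M)"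
    and "R \<in> carrier_mat r r" and "invertible_mat R"
    and "i < n" and "j < n"
  shows "is_inverse_of L
           (pinv (mat_inv R * Xi r L enum j) * (mat_inv R * Xi r L enum i))
           (pinv (mat_inv R * Xi r L enum i) * (mat_inv R * Xi r L enum j))
         \<longleftrightarrow> Xi r L enum i = Xi r L enum j"
proof -
  note enum = assms(4) and R = assms(5,6)
  define Ri where "Ri = mat_inv R"
  have Ri: "Ri \<in> carrier_mat r r" using mat_inv_inverse(1)[OF R] unfolding Ri_def .
  have carrier: "Ri * Xi r L enum k \<in> carrier_mat r L" for k
    using Ri Xi_carrier by simp
  have left_inv: "left_invertible (Ri * Xi r L enum k)" if "k < n" for k
    using left_invertible_mult[OF Ri left_invertible_mat_inv[OF R, folded Ri_def]
        Xi_carrier Xi_left_invertible[OF enum that]] .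
  define K where "K = pinv (Ri * Xi r L enum i) * (Ri * Xi r L enum j)"
  have K: "K \<in> carrier_mat L L"
    using pinv_left_invertible(1)[OF carrier left_inv[OF assms(7)]] carrier unfolding K_def by simp
  show ?thesis
    unfolding Ri_def[symmetric] K_def[symmetric]
  proof
    assume "is_inverse_of L (pinv (Ri * Xi r L enum j) * (Ri * Xi r L enum i)) K"
    then have "Ri * Xi r L enum j = (Ri * Xi r L enum i) * K"
      using factor_if_pinv_products_inverse[OF carrier left_inv carrier left_inv] assms(7,8)
      unfolding is_inverse_of_def K_def by blast
    also have "\<dots> = Ri * (Xi r L enum i * K)"
      using assoc_mult_mat[OF Ri Xi_carrier K] .
    finally have "Xi r L enum j = Xi r L enum i * K"
      using mat_inv_mult_left_cancel[OF R Xi_carrier mult_carrier_mat[OF Xi_carrier K]]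
      unfolding Ri_def by blast
    then show "Xi r L enum i = Xi r L enum j"
      by (rule Xi_eq_if_factor[OF enum assms(7,8) K])
  next
    assume "Xi r L enum i = Xi r L enum j"
    then show "is_inverse_of L (pinv (Ri * Xi r L enum j) * (Ri * Xi r L enum i)) K"
      using pinv_left_invertible[OF carrier left_inv[OF assms(7)]]
      unfolding is_inverse_of_def K_def by simp
  qed
qed

end
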